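(* Let $0<\mu<L$, $q=\mu/L$, and define $A_0=0$, $A_{k+1}=\frac{(1+q)A_k+2\big(1+\sqrt{(1+A_k)(1+qA_k)}\big)}{(1-q)^2}$, $\delta_k=\sqrt{\frac{A_{k+1}}{1+qA_{k+1}}}$ and $\sigma_k=\sqrt{(1+A_k)(1+qA_k)}$ for $k\in\mathbb{N}_0$. Then for every $k\in\mathbb{N}_0$: $A_k\ge0$; $A_{k+1}>0$; $\delta_k>0$; $A_{k+1}-A_k\ge0$; $A_{k+1}-A_k+\sigma_{k+1}-\sigma_k\ge0$; $(1+q)A_{k+1}-A_k\ge0$; $(1+q)A_{k+1}-A_k-\sigma_k+1\ge0$; and $\sigma_k-1\ge0$. *)

theory Defs
  imports Complex_Main
begin

primrec seqA :: "real \<Rightarrow> nat \<Rightarrow> real" where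
  "seqA q 0 = 0"
| "seqA q (Suc k) =
     ((1 + q) * seqA q k + 2 * (1 + sqrt ((1 + seqA q k) * (1 + q * seqA q k)))) / (1 - q)^2"

definition seqdelta :: "real \<Rightarrow> nat \<Rightarrow> real" where
  "seqdelta q k = sqrt (seqA q (Suc k) / (1 + q * seqA q (Suc k)))"

definition seqsigma :: "real \<Rightarrow> nat \<Rightarrow> real" where
  "seqsigma q k = sqrt ((1 + seqA q k) * (1 + q * seqA q k))"

end

theory Submission
  imports Defs
begin

text \<open>For \<open>0 \<le> q < 1\<close>, dividing by \<open>(1 - q)\<^sup>2 \<in> (0, 1]\<close> can only enlarge the nonnegative
  numerator, so \<open>A\<^sub>k\<^sub>+\<^sub>1 \<ge> (1 + q) A\<^sub>k + 2 (1 + \<sigma>\<^sub>k)\<close>, where \<open>\<sigma>\<^sub>k \<ge> 1\<close> because \<open>A\<^sub>k \<ge> 0\<close>.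
  Every claim follows from this bound, \<open>A\<^sub>k \<ge> 0\<close> and the monotonicity of \<open>\<sigma>\<close> in \<open>A\<close>.\<close>

lemma one_le_sqrt_mult:
  fixes q A :: real
  assumes "0 \<le> q" "0 \<le> A"
  shows "1 \<le> sqrt ((1 + A) * (1 + q * A))"
proof -
  have "1 * 1 \<le> (1 + A) * (1 + q * A)"
    using assms by (intro mult_mono) auto
  then show ?thesis by simp
qed

lemma seqA_nonneg:
  assumes "0 \<le> q"
  shows "0 \<le> seqA q k"
proof (induction k)
  case 0
  then show ?case by simp
next
  case (Suc k)
  then have "0 \<le> (1 + q) * seqA q k + 2 * (1 + sqrt ((1 + seqA q k) * (1 + q * seqA q k)))"
    using assms by simp
  then show ?case by simp
qed

declare seqA.simps(2) [simp del]

lemma seqsigma_ge_1: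
  assumes "0 \<le> q"
  shows "1 \<le> seqsigma q k"
  unfolding seqsigma_def using one_le_sqrt_mult[OF assms seqA_nonneg[OF assms]] .

lemma seqA_Suc_ge:
  assumes "0 \<le> q" "q < 1"
  shows "(1 + q) * seqA q k + 2 * (1 + seqsigma q k) \<le> seqA q (Suc k)"
proof -
  define N where "N = (1 + q) * seqA q k + 2 * (1 + seqsigma q k)"
  have "0 \<le> N"
    unfolding N_def using assms seqA_nonneg[OF assms(1), of k] seqsigma_ge_1[OF assms(1), of k]
    by simp
  moreover have "0 < (1 - q)\<^sup>2" "(1 - q)\<^sup>2 \<le> 1"
    using assms by (simp_all add: power2_eq_square mult_le_one)
  ultimately have "N \<le> N / (1 - q)\<^sup>2"
    by (simp add: le_divide_eq mult_left_le)
  then show ?thesis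
    unfolding N_def seqsigma_def seqA.simps(2) by simp
qed

lemma seqA_le_Suc:
  assumes "0 \<le> q" "q < 1"
  shows "seqA q k \<le> seqA q (Suc k)"
proof -
  have "0 \<le> q * seqA q k"
    using assms(1) seqA_nonneg[OF assms(1)] by simp
  then show ?thesis
    using seqA_Suc_ge[OF assms, of k] seqsigma_ge_1[OF assms(1), of k] by (simp add: distrib_right)
qed

lemma seqsigma_le_Suc:
  assumes "0 \<le> q" "q < 1"
  shows "seqsigma q k \<le> seqsigma q (Suc k)"
proof -
  have A: "0 \<le> seqA q k" "seqA q k \<le> seqA q (Suc k)"
    using seqA_nonneg[OF assms(1)] seqA_le_Suc[OF assms] by auto
  then have "1 + q * seqA q k \<le> 1 + q * seqA q (Suc k)" "0 \<le> 1 + q * seqA q k"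
    using assms(1) by (simp_all add: mult_left_mono)
  with A have "(1 + seqA q k) * (1 + q * seqA q k) \<le> (1 + seqA q (Suc k)) * (1 + q * seqA q (Suc k))"
    by (intro mult_mono) auto
  then show ?thesis
    unfolding seqsigma_def by simp
qed

lemma seqA_Suc_pos:
  assumes "0 \<le> q" "q < 1"
  shows "0 < seqA q (Suc k)"
proof -
  have "0 \<le> q * seqA q k"
    using assms(1) seqA_nonneg[OF assms(1)] by simp
  then show ?thesis
    using seqA_Suc_ge[OF assms, of k] seqA_nonneg[OF assms(1), of k] seqsigma_ge_1[OF assms(1), of k]
    by (simp add: distrib_right)
qed

lemma seqdelta_pos:
  assumes "0 \<le> q" "q < 1"
  shows "0 < seqdelta q k"
  unfolding seqdelta_def using seqA_Suc_pos[OF assms, of k] assms(1)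
  by (simp add: add_pos_nonneg)

theorem lemma1:
  fixes mu L q :: real and k :: nat
  assumes "0 < mu" and "mu < L" and "q = mu / L"
  shows "seqA q k \<ge> 0 \<and> seqA q (Suc k) > 0 \<and> seqdelta q k > 0
    \<and> seqA q (Suc k) - seqA q k \<ge> 0
    \<and> seqA q (Suc k) - seqA q k + seqsigma q (Suc k) - seqsigma q k \<ge> 0
    \<and> (1 + q) * seqA q (Suc k) - seqA q k \<ge> 0
    \<and> (1 + q) * seqA q (Suc k) - seqA q k - seqsigma q k + 1 \<ge> 0
    \<and> seqsigma q k - 1 \<ge> 0"
proof -
  have q: "0 \<le> q" "q < 1"
    using assms by simp_all
  have "0 \<le> q * seqA q k" "0 \<le> q * seqA q (Suc k)"
    using q(1) seqA_nonneg[OF q(1)] by simp_all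
  with seqA_Suc_ge[OF q, of k] seqA_nonneg[OF q(1), of k] seqsigma_ge_1[OF q(1), of k]
    seqA_le_Suc[OF q, of k] seqsigma_le_Suc[OF q, of k] seqA_Suc_pos[OF q, of k]
    seqdelta_pos[OF q, of k]
  show ?thesis
    by (simp add: distrib_right)
qed

end
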